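(* Let $p,q\in\mathbb R$, $\tilde p=p-2p^2$. The fifth order differential equation \begin{align*} &x^5R^{(5)}+10x^4R^{(4)}+x^3(20x^2-20qx+22+10\tilde p)R'''+x^2(64x^2-76qx+4+44\tilde p)R''\\ &+4x\big(16x^4-32qx^3+4(4q^2+4\tilde p+1)x^2-q(6+16\tilde p)x+4\tilde p^2+7\tilde p-1\big)R'\\ &+8\big(-4qx^3+4(q^2+\tilde p)x^2-q(6\tilde p-1)x+2\tilde p^2\big)R=0 \end{align*} admits a unique formal solution of the form $R(x)=\frac1\pi+\frac1\pi\sum_{n\ge1}\pi^n g_nx^{-n}$, with $$g_1=-\frac{q}{2\pi},\ g_2=\frac{2\tilde p-q^2}{8\pi^2},\ g_3=-\frac{q(-1-2\tilde p+q^2)}{16\pi^3},\ g_4=\frac{-16\tilde p-4\tilde p^2+19q^2+12\tilde pq^2-5q^4}{128\pi^4},$$ and for $n\ge1$ \begin{align*} &64(n+4)\pi^4g_{n+4}-32q(4n+11)\pi^3g_{n+3}\\ &+4\big(32+54n+29n^2+5n^3+8\tilde p(2n+3)+24q^2+16nq^2\big)\pi^2g_{n+2}\\ &-4q\big(4\tilde p(1+4n)+n(4+11n+5n^2)\big)\pi g_{n+1}\\ &+(n-1)\big(16\tilde p^2+2\tilde pn(5n-2)+n^2(n^2+n-2)\big)g_n=0. \end{align*}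
   Context: This differential equation is satisfied by $R(x)=\frac1\pi\rho_{(1),\infty}(x/\pi;4,p,q)$, the rescaled bulk density at the spectrum singularity of the generalised circular Jacobi ensemble with $\beta=4$ (probability density on $(-\pi,\pi]^N$ proportional to $\prod_l e^{q\theta_l}|1+e^{i\theta_l}|^{4p}\prod_{j<k}|e^{i\theta_k}-e^{i\theta_j}|^4$, scaled density $\rho_{(1),\infty}(x)=\lim_{N\to\infty}\frac{2\pi}{N}\rho_{(1),N}(-\pi\,\mathrm{sgn}(x)+2\pi x/N)$). *)

theory Defs
  imports Complex_Main "HOL-Computational_Algebra.Polynomial"
begin

text \<open>A formal series in inverse powers of x is represented by its coefficient
  sequence c, standing for R(x) = sum over n of c n * x^(-n).
  Coefficient of x^m (m an integer) in the formal product x^a * R^(j)(x):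
  since the j-th derivative of x^(-n) is (-1)^j * n(n+1)...(n+j-1) * x^(-n-j),
  it is the contribution of the index n = a - j - m (if n is nonnegative).\<close>
definition xpow_deriv_coeff :: "(nat \<Rightarrow> real) \<Rightarrow> nat \<Rightarrow> nat \<Rightarrow> int \<Rightarrow> real" where
  "xpow_deriv_coeff c a j m =
     (if int a - int j - m \<ge> 0
      then (-1) ^ j * pochhammer (real (nat (int a - int j - m))) j * c (nat (int a - int j - m))
      else 0)"

definition ode_coeff :: "(nat \<Rightarrow> real poly) \<Rightarrow> (nat \<Rightarrow> real) \<Rightarrow> int \<Rightarrow> real" where
  "ode_coeff P c m = (\<Sum>j\<le>5. \<Sum>a\<le>degree (P j). coeff (P j) a * xpow_deriv_coeff c a j m)"

definition gcJ_polys :: "real \<Rightarrow> real \<Rightarrow> nat \<Rightarrow> real poly" where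
  "gcJ_polys p q j =
    (let pt = p - 2 * p^2 in
     if j = 5 then monom 1 5
     else if j = 4 then monom 10 4
     else if j = 3 then monom 1 3 * [:22 + 10 * pt, -20 * q, 20:]
     else if j = 2 then monom 1 2 * [:4 + 44 * pt, -76 * q, 64:]
     else if j = 1 then smult 4 (monom 1 1 *
            [:4 * pt^2 + 7 * pt - 1, - q * (6 + 16 * pt), 4 * (4 * q^2 + 4 * pt + 1), -32 * q, 16:])
     else if j = 0 then smult 8 [:2 * pt^2, - q * (6 * pt - 1), 4 * (q^2 + pt), -4 * q:]
     else 0)"

definition gcJ_formal_solution :: "real \<Rightarrow> real \<Rightarrow> (nat \<Rightarrow> real) \<Rightarrow> bool" where
  "gcJ_formal_solution p q c \<longleftrightarrow> (\<forall>m::int. ode_coeff (gcJ_polys p q) c m = 0)"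

end

theory Submission
  imports Defs
begin

text \<open>An operator sum_j P_j(x) D^j in which P_j only contains the powers x^j, ..., x^(j+4)
  sends x^(-n) to sum_(d<=4) L_d(n) x^(d-n) for certain polynomials L_d. Hence the coefficient of
  x^(4-n) in the image of sum_n c_n x^(-n) is sum_d L_d(n-4+d) c_(n-4+d), a five-term recurrence.
  For the present ODE L_4(x) = -64x does not vanish at x = n >= 1, so c_0 determines all c_n, and
  the recurrence for g_n is this one after the rescaling c_n = pi^(n-1) g_n.\<close>

definition coeff_int :: "(nat \<Rightarrow> real) \<Rightarrow> int \<Rightarrow> real" where
  "coeff_int c k = (if k \<ge> 0 then c (nat k) else 0)"

lemma xpow_deriv_coeff_eq:
  "xpow_deriv_coeff c a j m =
     (-1) ^ j * pochhammer (of_int (int a - int j - m)) j * coeff_int c (int a - int j - m)"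
  by (simp add: xpow_deriv_coeff_def coeff_int_def)

text \<open>ode_shift_coeff P d n is the coefficient L_d(n) of x^(d-n) in the image of x^(-n).\<close>
definition ode_shift_coeff :: "(nat \<Rightarrow> real poly) \<Rightarrow> nat \<Rightarrow> real \<Rightarrow> real" where
  "ode_shift_coeff P d x = (\<Sum>j\<le>5. coeff (P j) (j + d) * (-1) ^ j * pochhammer x j)"

lemma sum_coeff_support:
  fixes f :: "nat \<Rightarrow> 'a::semiring_0"
  assumes "\<And>a. coeff P a \<noteq> 0 \<Longrightarrow> j \<le> a \<and> a \<le> j + D"
  shows "(\<Sum>a\<le>degree P. coeff P a * f a) = (\<Sum>d\<le>D. coeff P (j + d) * f (j + d))"
proof -
  have "(\<Sum>a\<le>degree P. coeff P a * f a) = (\<Sum>a\<in>{..degree P} \<union> {j..j + D}. coeff P a * f a)"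
    using assms by (intro sum.mono_neutral_left) (auto simp: coeff_eq_0)
  also have "\<dots> = (\<Sum>a\<in>{j..j + D}. coeff P a * f a)"
    by (intro sum.mono_neutral_right) (use assms in force)+
  also have "\<dots> = (\<Sum>d\<le>D. coeff P (j + d) * f (j + d))"
    using sum.shift_bounds_cl_nat_ivl[of "\<lambda>a. coeff P a * f a" 0 j D]
    by (simp add: atLeast0AtMost add.commute)
  finally show ?thesis .
qed

lemma ode_coeff_shift_expansion:
  assumes "\<And>j a. j \<le> 5 \<Longrightarrow> coeff (P j) a \<noteq> 0 \<Longrightarrow> j \<le> a \<and> a \<le> j + D"
  shows "ode_coeff P c m = (\<Sum>d\<le>D. ode_shift_coeff P d (of_int (int d - m)) * coeff_int c (int d - m))"
proof -
  have "ode_coeff P c m = (\<Sum>j\<le>5. \<Sum>d\<le>D. coeff (P j) (j + d) * xpow_deriv_coeff c (j + d) j m)"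
    unfolding ode_coeff_def using assms by (intro sum.cong refl sum_coeff_support) auto
  also have "\<dots> = (\<Sum>d\<le>D. \<Sum>j\<le>5. coeff (P j) (j + d) * (-1) ^ j * pochhammer (of_int (int d - m)) j
                              * coeff_int c (int d - m))"
    by (subst sum.swap) (simp add: xpow_deriv_coeff_eq mult.assoc)
  also have "\<dots> = (\<Sum>d\<le>D. ode_shift_coeff P d (of_int (int d - m)) * coeff_int c (int d - m))"
    by (simp add: ode_shift_coeff_def sum_distrib_right)
  finally show ?thesis .
qed

lemma gcJ_polys_explicit:
  "gcJ_polys p q 5 = [:0, 0, 0, 0, 0, 1:]"
  "gcJ_polys p q 4 = [:0, 0, 0, 0, 10:]"
  "gcJ_polys p q 3 = [:0, 0, 0, 22 + 10 * (p - 2*p^2), -20 * q, 20:]"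
  "gcJ_polys p q 2 = [:0, 0, 4 + 44 * (p - 2*p^2), -76 * q, 64:]"
  "gcJ_polys p q 1 = [:0, 4 * (4 * (p - 2*p^2)^2 + 7 * (p - 2*p^2) - 1), - 4 * q * (6 + 16 * (p - 2*p^2)),
                        16 * (4 * q^2 + 4 * (p - 2*p^2) + 1), -128 * q, 64:]"
  "gcJ_polys p q 0 = [:16 * (p - 2*p^2)^2, - 8 * q * (6 * (p - 2*p^2) - 1), 32 * (q^2 + (p - 2*p^2)), -32 * q:]"
  by (simp_all add: gcJ_polys_def monom_altdef Let_def eval_nat_numeral)

lemma gcJ_polys_support:
  assumes "j \<le> 5" "coeff (gcJ_polys p q j) a \<noteq> 0"
  shows "j \<le> a \<and> a \<le> j + 4"
proof -
  have "j = 0 \<or> j = 1 \<or> j = 2 \<or> j = 3 \<or> j = 4 \<or> j = 5" using assms(1) by auto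
  then show ?thesis using assms(2)
    by (elim disjE; simp only: gcJ_polys_explicit; auto simp: coeff_pCons split: nat.splits)
qed

lemma ode_shift_coeff_expand:
  "ode_shift_coeff P d x =
      coeff (P 0) d - coeff (P 1) (1 + d) * x + coeff (P 2) (2 + d) * pochhammer x 2
    - coeff (P 3) (3 + d) * pochhammer x 3 + coeff (P 4) (4 + d) * pochhammer x 4
    - coeff (P 5) (5 + d) * pochhammer x 5"
  by (simp add: ode_shift_coeff_def numeral_eq_Suc atMost_Suc eval_nat_numeral algebra_simps)

lemma gcJ_shift_coeffs:
  assumes pt: "pt = p - 2 * p^2"
  shows "ode_shift_coeff (gcJ_polys p q) 0 x = - (x - 1) * (16 * pt^2 + 2 * pt * x * (5 * x - 2) + x^2 * (x^2 + x - 2))"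
    and "ode_shift_coeff (gcJ_polys p q) 1 x = q * (20 * x^3 - 16 * x^2 + (64 * pt - 12) * x + 8 - 48 * pt)"
    and "ode_shift_coeff (gcJ_polys p q) 2 x = - 20 * x^3 + 4 * x^2 + (8 - 64 * q^2 - 64 * pt) * x + 32 * (q^2 + pt)"
    and "ode_shift_coeff (gcJ_polys p q) 3 x = 128 * q * x - 32 * q"
    and "ode_shift_coeff (gcJ_polys p q) 4 x = - 64 * x"
  by (simp_all only: ode_shift_coeff_expand gcJ_polys_explicit)
    (simp add: pochhammer_Suc eval_nat_numeral pt; algebra)+

lemma ode_coeff_gcJ_eq:
  "ode_coeff (gcJ_polys p q) c (4 - k) =
     (\<Sum>d\<le>4. ode_shift_coeff (gcJ_polys p q) d (of_int (k + int d - 4)) * coeff_int c (k + int d - 4))"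
  by (subst ode_coeff_shift_expansion[where D = 4, OF gcJ_polys_support]) (simp_all add: algebra_simps)

definition gcJ_lower :: "real \<Rightarrow> real \<Rightarrow> (nat \<Rightarrow> real) \<Rightarrow> nat \<Rightarrow> real" where
  "gcJ_lower p q c n =
     (\<Sum>d<4. ode_shift_coeff (gcJ_polys p q) d (real n + real d - 4) * coeff_int c (int n + int d - 4))"

lemma ode_coeff_gcJ_nat:
  "ode_coeff (gcJ_polys p q) c (4 - int n) = gcJ_lower p q c n - 64 * real n * c n"
proof -
  have "{..4::nat} = insert 4 {..<4}" by auto
  then show ?thesis
    unfolding ode_coeff_gcJ_eq gcJ_lower_def by (simp add: gcJ_shift_coeffs(5) coeff_int_def)
qed

lemma ode_coeff_gcJ_nonpos:
  assumes "k \<le> 0"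
  shows "ode_coeff (gcJ_polys p q) c (4 - k) = 0"
proof -
  have term_zero:
    "ode_shift_coeff (gcJ_polys p q) d (of_int (k + int d - 4)) * coeff_int c (k + int d - 4) = 0"
    if "d \<le> 4" for d
  proof (cases "d = 4 \<and> k = 0")
    case True
    then show ?thesis by (simp add: gcJ_shift_coeffs(5))
  next
    case False
    then have "k + int d - 4 < 0" using that assms by auto
    then show ?thesis by (simp add: coeff_int_def)
  qed
  show ?thesis unfolding ode_coeff_gcJ_eq by (intro sum.neutral ballI term_zero) simp
qed

lemma gcJ_formal_solution_iff:
  "gcJ_formal_solution p q c \<longleftrightarrow> (\<forall>n\<ge>1. 64 * real n * c n = gcJ_lower p q c n)"
proof
  assume "gcJ_formal_solution p q c"
  then show "\<forall>n\<ge>1. 64 * real n * c n = gcJ_lower p q c n"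
    unfolding gcJ_formal_solution_def using ode_coeff_gcJ_nat[of p q c] by (metis eq_iff_diff_eq_0)
next
  assume rec: "\<forall>n\<ge>1. 64 * real n * c n = gcJ_lower p q c n"
  show "gcJ_formal_solution p q c"
    unfolding gcJ_formal_solution_def
  proof
    fix m :: int
    show "ode_coeff (gcJ_polys p q) c m = 0"
    proof (cases "4 - m \<le> 0")
      case True
      then show ?thesis using ode_coeff_gcJ_nonpos[of "4 - m"] by simp
    next
      case False
      define n where "n = nat (4 - m)"
      have "m = 4 - int n" "n \<ge> 1" using False by (auto simp: n_def)
      then show ?thesis using rec ode_coeff_gcJ_nat[of p q c n] by simp
    qed
  qed
qed

lemma gcJ_lower_cong:
  assumes "\<And>k. k < n \<Longrightarrow> c k = c' k"
  shows "gcJ_lower p q c n = gcJ_lower p q c' n"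
  unfolding gcJ_lower_def coeff_int_def using assms by (intro sum.cong refl) auto

lemma gcJ_formal_solution_unique:
  assumes "gcJ_formal_solution p q c" "gcJ_formal_solution p q c'" "c 0 = c' 0"
  shows "c = c'"
proof
  fix n show "c n = c' n"
  proof (induction n rule: less_induct)
    case (less n)
    show ?case
    proof (cases "n = 0")
      case False
      then have "64 * real n * c n = 64 * real n * c' n"
        using assms(1,2) gcJ_lower_cong[of n c c' p q] less
        unfolding gcJ_formal_solution_iff by simp
      then show ?thesis using False by simp
    qed (use assms(3) in simp)
  qed
qed

function gcJ_coeffs :: "real \<Rightarrow> real \<Rightarrow> nat \<Rightarrow> real" where
  "gcJ_coeffs p q n =
     (if n = 0 then 1 / pi
      else (\<Sum>d<4. ode_shift_coeff (gcJ_polys p q) d (real n + real d - 4) *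
                    (if 4 \<le> n + d then gcJ_coeffs p q (n + d - 4) else 0)) / (64 * real n))"
  by auto
termination by (relation "measure (\<lambda>(p, q, n). n)") auto

declare gcJ_coeffs.simps [simp del]

lemma gcJ_coeffs_solution: "gcJ_formal_solution p q (gcJ_coeffs p q)"
  unfolding gcJ_formal_solution_iff
proof (intro allI impI)
  fix n :: nat assume "n \<ge> 1"
  have "gcJ_lower p q (gcJ_coeffs p q) n =
      (\<Sum>d<4. ode_shift_coeff (gcJ_polys p q) d (real n + real d - 4) *
               (if 4 \<le> n + d then gcJ_coeffs p q (n + d - 4) else 0))"
    unfolding gcJ_lower_def coeff_int_def by (intro sum.cong refl) (simp add: nat_diff_distrib' nat_int_add)
  then show "64 * real n * gcJ_coeffs p q n = gcJ_lower p q (gcJ_coeffs p q) n"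
    using \<open>n \<ge> 1\<close> by (subst gcJ_coeffs.simps) simp
qed

lemma gcJ_coeffs_0: "gcJ_coeffs p q 0 = 1 / pi"
  by (simp add: gcJ_coeffs.simps)

lemma gcJ_initial_coeffs:
  assumes sol: "gcJ_formal_solution p q c" and c0: "c 0 = 1 / pi" and pt: "pt = p - 2 * p^2"
  shows "c 1 = - q / (2 * pi)"
    and "c 2 = (2 * pt - q^2) / (8 * pi)"
    and "c 3 = - (q * (-1 - 2 * pt + q^2)) / (16 * pi)"
    and "c 4 = (-16 * pt - 4 * pt^2 + 19 * q^2 + 12 * pt * q^2 - 5 * q^4) / (128 * pi)"
proof -
  have "{..<4::nat} = {0, 1, 2, 3}" by auto
  then have rec: "64 * real n * c n =
      (\<Sum>d\<in>{0, 1, 2, 3}. ode_shift_coeff (gcJ_polys p q) d (real n + real d - 4) * coeff_int c (int n + int d - 4))"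
    if "n \<ge> 1" for n
    using sol that unfolding gcJ_formal_solution_iff gcJ_lower_def by simp
  note L = gcJ_shift_coeffs[OF pt] gcJ_shift_coeffs(2)[OF pt, unfolded One_nat_def]
  \<comment> \<open>\<open>algebra\<close> cannot cancel the factor \<open>pi\<close> that \<open>field_simps\<close> leaves on both sides\<close>
  have pi_inv: "pi * (1 / pi) = 1" by simp
  show c1: "c 1 = - q / (2 * pi)"
    using rec[of 1] by (simp add: L coeff_int_def c0 field_simps)
  note c1' = c1[unfolded One_nat_def]
  show c2: "c 2 = (2 * pt - q^2) / (8 * pi)"
    using rec[of 2] by (simp add: L coeff_int_def c0 c1' field_simps) (insert pi_inv, algebra)
  show c3: "c 3 = - (q * (-1 - 2 * pt + q^2)) / (16 * pi)"
    using rec[of 3] by (simp add: L coeff_int_def c0 c1' c2 field_simps) (insert pi_inv, algebra)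
  show "c 4 = (-16 * pt - 4 * pt^2 + 19 * q^2 + 12 * pt * q^2 - 5 * q^4) / (128 * pi)"
    using rec[of 4] by (simp add: L coeff_int_def c0 c1' c2 c3 field_simps) (insert pi_inv, algebra)
qed

lemma gcJ_recurrence:
  assumes "gcJ_formal_solution p q c"
  shows "(\<Sum>d\<le>4. ode_shift_coeff (gcJ_polys p q) d (real (n + d)) * c (n + d)) = 0"
proof -
  have "ode_coeff (gcJ_polys p q) c (4 - (int n + 4)) = 0"
    using assms unfolding gcJ_formal_solution_def by blast
  then show ?thesis
    unfolding ode_coeff_gcJ_eq by (simp add: coeff_int_def nat_int_add)
qed

lemma gcJ_scaled_recurrence:
  fixes g :: "nat \<Rightarrow> real"
  assumes sol: "gcJ_formal_solution p q c"
    and scale: "\<forall>n\<ge>1. c n = (1 / pi) * pi ^ n * g n"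
    and n: "n \<ge> 1" and pt: "pt = p - 2 * p^2"
  shows "64 * (real n + 4) * pi^4 * g (n + 4)
          - 32 * q * (4 * real n + 11) * pi^3 * g (n + 3)
          + 4 * (32 + 54 * real n + 29 * real n^2 + 5 * real n^3 + 8 * pt * (2 * real n + 3)
                 + 24 * q^2 + 16 * real n * q^2) * pi^2 * g (n + 2)
          - 4 * q * (4 * pt * (1 + 4 * real n) + real n * (4 + 11 * real n + 5 * real n^2)) * pi * g (n + 1)
          + (real n - 1) * (16 * pt^2 + 2 * pt * real n * (5 * real n - 2)
                 + real n^2 * (real n^2 + real n - 2)) * g n = 0"
proof -
  let ?L = "ode_shift_coeff (gcJ_polys p q)"
  have "(\<Sum>d\<le>4. ?L d (real (n + d)) * c (n + d))
      = pi ^ n / pi * (\<Sum>d\<le>4. ?L d (real (n + d)) * pi ^ d * g (n + d))"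
    using scale n by (simp add: sum_distrib_left power_add mult_ac)
  then have scaled: "(\<Sum>d\<le>4. ?L d (real (n + d)) * pi ^ d * g (n + d)) = 0"
    using gcJ_recurrence[OF sol] by simp
  have sum_atMost_4: "(\<Sum>d\<le>4. f d) = f 0 + f 1 + f 2 + f 3 + f 4" for f :: "nat \<Rightarrow> real"
    by (simp add: numeral_eq_Suc atMost_Suc)
  show ?thesis
    using scaled unfolding sum_atMost_4 gcJ_shift_coeffs[OF pt] of_nat_add by simp algebra
qed

theorem proposition3p2:
  fixes p q :: real
  defines "pt \<equiv> p - 2 * p^2"
  shows "(\<exists>!c :: nat \<Rightarrow> real. c 0 = 1 / pi \<and> gcJ_formal_solution p q c)
    \<and> (\<forall>(c :: nat \<Rightarrow> real) (g :: nat \<Rightarrow> real).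
         c 0 = 1 / pi \<and> gcJ_formal_solution p q c \<and>
         (\<forall>n\<ge>1. c n = (1 / pi) * pi ^ n * g n) \<longrightarrow>
         g 1 = - q / (2 * pi)
       \<and> g 2 = (2 * pt - q^2) / (8 * pi^2)
       \<and> g 3 = - (q * (-1 - 2 * pt + q^2)) / (16 * pi^3)
       \<and> g 4 = (-16 * pt - 4 * pt^2 + 19 * q^2 + 12 * pt * q^2 - 5 * q^4) / (128 * pi^4)
       \<and> (\<forall>n::nat. n \<ge> 1 \<longrightarrow>
            64 * (real n + 4) * pi^4 * g (n + 4)
          - 32 * q * (4 * real n + 11) * pi^3 * g (n + 3)
          + 4 * (32 + 54 * real n + 29 * real n^2 + 5 * real n^3 + 8 * pt * (2 * real n + 3)
                 + 24 * q^2 + 16 * real n * q^2) * pi^2 * g (n + 2)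
          - 4 * q * (4 * pt * (1 + 4 * real n) + real n * (4 + 11 * real n + 5 * real n^2)) * pi * g (n + 1)
          + (real n - 1) * (16 * pt^2 + 2 * pt * real n * (5 * real n - 2)
                 + real n^2 * (real n^2 + real n - 2)) * g n = 0))"
proof (intro conjI allI impI)
  show "\<exists>!c :: nat \<Rightarrow> real. c 0 = 1 / pi \<and> gcJ_formal_solution p q c"
    using gcJ_coeffs_0 gcJ_coeffs_solution gcJ_formal_solution_unique
    by (intro ex1I[of _ "gcJ_coeffs p q"]) auto
next
  fix c g :: "nat \<Rightarrow> real"
  assume "c 0 = 1 / pi \<and> gcJ_formal_solution p q c \<and> (\<forall>n\<ge>1. c n = (1 / pi) * pi ^ n * g n)"
  then have c0: "c 0 = 1 / pi" and sol: "gcJ_formal_solution p q c"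
    and scale: "\<forall>n\<ge>1. c n = (1 / pi) * pi ^ n * g n" by auto
  have pt: "pt = p - 2 * p^2" by (simp add: pt_def)
  have g: "g k = pi * c k / pi ^ k" if "k \<ge> 1" for k
    using scale that by (simp add: field_simps)
  note c = gcJ_initial_coeffs[OF sol c0 pt]
  show "g 1 = - q / (2 * pi)"
    by (subst g) (simp_all add: c(1)[unfolded One_nat_def])
  show "g 2 = (2 * pt - q^2) / (8 * pi^2)"
    by (subst g) (simp_all add: c field_simps power2_eq_square)
  show "g 3 = - (q * (-1 - 2 * pt + q^2)) / (16 * pi^3)"
    by (subst g) (simp_all add: c field_simps power3_eq_cube)
  show "g 4 = (-16 * pt - 4 * pt^2 + 19 * q^2 + 12 * pt * q^2 - 5 * q^4) / (128 * pi^4)"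
    by (subst g) (simp_all add: c field_simps)
qed (use gcJ_scaled_recurrence pt_def in blast)

end
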